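(* Let $G$ be any GP 2 host graph in which every node is marked grey and is not a root, and every edge is unmarked (node and edge labels arbitrary; parallel edges and loops allowed). Then the execution of the GP 2 program is-connected on $G$ terminates, and: if $G$ is connected, it does not fail and returns a host graph isomorphic to $G$ up to marks; if $G$ is not connected, it fails. (That is, is-connected is totally correct with respect to this input/output specification.)
   Context: A graph is connected if for every pair of distinct nodes $u,v$ there is a path of edges from $u$ to $v$ regardless of edge directions (the empty graph and one-node graphs are connected). "Isomorphic up to marks" means isomorphic when node/edge marks (and root status) are ignored, i.e. same nodes, edges, incidences and labels. GP 2 semantics. Host graphs are finite directed graphs (parallel edges and loops allowed); every node and edge carries a label (a list of integers and strings) and a mark: nodes are unmarked or red, green, blue or grey; edges are unmarked or red, green, blue or dashed. Some nodes are roots. A rule consists of a left-hand graph $L$ and a right-hand graph $R$ sharing an interface of nodes; labels may contain variables; a rule item with mark "any" matches any mark. A rule is applied to a host graph by finding an injective morphism from $L$ into the host graph compatible with labels (for some instantiation of the variables) and marks, mapping roots of $L$ to roots, satisfying the dangling condition (deleted nodes must not be incident with unmatched edges) and the rule's condition; then matched items are deleted/changed/added as prescribed by $R$ (interface nodes take the mark, label and root status given in $R$). Commands: calling a rule or rule set $\{r_1,\dots,r_k\}$ applies one applicable rule and fails if none applies; $P;Q$ is sequencing; $P!$ executes $P$ repeatedly until it fails, returning the graph on which $P$ was last entered, and a break inside the loop body terminates the loop returning the current graph; "try $C$ then $P$ else $Q$" executes $C$ and, if $C$ succeeds, continues with $P$ on its result, otherwise executes $Q$ on the original graph (a missing branch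 means do nothing); "if $C$ then $P$ else $Q$" executes $C$ on a copy and then $P$ (if $C$ succeeded) or $Q$ (if $C$ failed) on the original graph; fail causes failure of the program. The program is-connected (variables x,y,z of type list; all rules keep all labels unchanged): Main = try init then (DFS!; Check); DFS = FORWARD!; try back else break; FORWARD = next_edge; {move, ignore}; Check = if match then fail. In all rules below the edge between nodes 1 and 2 is undirected: it matches a host edge in either direction, and the host edge keeps its direction. - init: a grey non-root node becomes a blue root. - match: a grey node; no change (used as a test). - next_edge: a blue root 1 and a node 2 of any mark joined by an unmarked edge; the edge becomes red. - ignore: a blue root 1 and a blue node 2 joined by a red edge; the edge becomes blue. - move: a blue root 1 and a grey node 2 joined by a red edge; node 1 becomes a non-root (still blue), node 2 becomes a blue root, the edge becomes dashed. - back: a blue non-root node 1 and a blue root 2 joined by a dashed edge; node 1 becomes a root, node 2 a non-root (still blue), the edge becomes blue. *)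

theory Defs
  imports Main
begin

datatype atom = AInt int | AStr string
type_synonym label = "atom list"

datatype nmark = NUnmarked | NRed | NGreen | NBlue | NGrey
datatype emark = EUnmarked | ERed | EGreen | EBlue | EDashed

record ('v, 'e) hgraph =
  V     :: "'v set"
  E     :: "'e set"
  src   :: "'e \<Rightarrow> 'v"
  tgt   :: "'e \<Rightarrow> 'v"
  nlab  :: "'v \<Rightarrow> label"
  elab  :: "'e \<Rightarrow> label"
  nmk   :: "'v \<Rightarrow> nmark"
  emk   :: "'e \<Rightarrow> emark"
  root  :: "'v \<Rightarrow> bool"

definition host_graph :: "('v, 'e) hgraph \<Rightarrow> bool" where
  "host_graph G \<longleftrightarrow> finite (V G) \<and> finite (E G) \<and>
     (\<forall>e\<in>E G. src G e \<in> V G \<and> tgt G e \<in> V G)"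

definition uadj :: "('v, 'e) hgraph \<Rightarrow> 'v \<Rightarrow> 'v \<Rightarrow> bool" where
  "uadj G u v \<longleftrightarrow> (\<exists>e\<in>E G. (src G e = u \<and> tgt G e = v) \<or> (src G e = v \<and> tgt G e = u))"

definition connected_graph :: "('v, 'e) hgraph \<Rightarrow> bool" where
  "connected_graph G \<longleftrightarrow> (\<forall>u\<in>V G. \<forall>v\<in>V G. (uadj G)\<^sup>*\<^sup>* u v)"

definition iso_up_to_marks :: "('v, 'e) hgraph \<Rightarrow> ('w, 'f) hgraph \<Rightarrow> bool" where
  "iso_up_to_marks G H \<longleftrightarrow> (\<exists>fV fE.
     bij_betw fV (V G) (V H) \<and> bij_betw fE (E G) (E H) \<and>
     (\<forall>e\<in>E G. src H (fE e) = fV (src G e) \<and> tgt H (fE e) = fV (tgt G e)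
                \<and> elab H (fE e) = elab G e) \<and>
     (\<forall>v\<in>V G. nlab H (fV v) = nlab G v))"

text \<open>A rule is represented by its application relation: r G H holds iff H is a result
  of applying the rule to G. None of the rules adds or deletes items or changes labels,
  so the result keeps the node/edge identities of G. Rule nodes 1 and 2 are matched
  injectively (u \<noteq> v); the undirected rule edge matches a host edge in either direction.\<close>

definition joins :: "('v, 'e) hgraph \<Rightarrow> 'e \<Rightarrow> 'v \<Rightarrow> 'v \<Rightarrow> bool" where
  "joins G e u v \<longleftrightarrow> e \<in> E G \<and> ((src G e = u \<and> tgt G e = v) \<or> (src G e = v \<and> tgt G e = u))"

definition init_r :: "('v, 'e) hgraph \<Rightarrow> ('v, 'e) hgraph \<Rightarrow> bool" where
  "init_r G H \<longleftrightarrow> (\<exists>u\<in>V G. nmk G u = NGrey \<and>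
     H = G\<lparr>nmk := (nmk G)(u := NBlue), root := (root G)(u := True)\<rparr>)"

definition match_r :: "('v, 'e) hgraph \<Rightarrow> ('v, 'e) hgraph \<Rightarrow> bool" where
  "match_r G H \<longleftrightarrow> (\<exists>u\<in>V G. nmk G u = NGrey) \<and> H = G"

definition next_edge_r :: "('v, 'e) hgraph \<Rightarrow> ('v, 'e) hgraph \<Rightarrow> bool" where
  "next_edge_r G H \<longleftrightarrow> (\<exists>u\<in>V G. \<exists>v\<in>V G. \<exists>e. u \<noteq> v \<and>
     nmk G u = NBlue \<and> root G u \<and> joins G e u v \<and> emk G e = EUnmarked \<and>
     H = G\<lparr>emk := (emk G)(e := ERed), root := (root G)(v := False)\<rparr>)"

definition ignore_r :: "('v, 'e) hgraph \<Rightarrow> ('v, 'e) hgraph \<Rightarrow> bool" where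
  "ignore_r G H \<longleftrightarrow> (\<exists>u\<in>V G. \<exists>v\<in>V G. \<exists>e. u \<noteq> v \<and>
     nmk G u = NBlue \<and> root G u \<and> nmk G v = NBlue \<and> joins G e u v \<and> emk G e = ERed \<and>
     H = G\<lparr>emk := (emk G)(e := EBlue), root := (root G)(v := False)\<rparr>)"

definition move_r :: "('v, 'e) hgraph \<Rightarrow> ('v, 'e) hgraph \<Rightarrow> bool" where
  "move_r G H \<longleftrightarrow> (\<exists>u\<in>V G. \<exists>v\<in>V G. \<exists>e. u \<noteq> v \<and>
     nmk G u = NBlue \<and> root G u \<and> nmk G v = NGrey \<and> joins G e u v \<and> emk G e = ERed \<and>
     H = G\<lparr>nmk := (nmk G)(v := NBlue), emk := (emk G)(e := EDashed),
           root := (root G)(u := False, v := True)\<rparr>)"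

definition back_r :: "('v, 'e) hgraph \<Rightarrow> ('v, 'e) hgraph \<Rightarrow> bool" where
  "back_r G H \<longleftrightarrow> (\<exists>u\<in>V G. \<exists>v\<in>V G. \<exists>e. u \<noteq> v \<and>
     nmk G u = NBlue \<and> nmk G v = NBlue \<and> root G v \<and> joins G e u v \<and> emk G e = EDashed \<and>
     H = G\<lparr>emk := (emk G)(e := EBlue), root := (root G)(u := True, v := False)\<rparr>)"

type_synonym ('v, 'e) rule = "('v, 'e) hgraph \<Rightarrow> ('v, 'e) hgraph \<Rightarrow> bool"

datatype ('v, 'e) cmd =
    Call "('v, 'e) rule set"
  | Seq "('v, 'e) cmd" "('v, 'e) cmd"
  | Loop "('v, 'e) cmd"
  | Break
  | FailC
  | Skip
  | Try "('v, 'e) cmd" "('v, 'e) cmd" "('v, 'e) cmd"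
  | IfC "('v, 'e) cmd" "('v, 'e) cmd" "('v, 'e) cmd"

datatype ('v, 'e) outcome = Ok "('v, 'e) hgraph" | Brk "('v, 'e) hgraph" | Failed

text \<open>Big-step relational semantics (nondeterministic); Brk G models a break
  propagating to the innermost enclosing loop.\<close>
inductive exec :: "('v, 'e) cmd \<Rightarrow> ('v, 'e) hgraph \<Rightarrow> ('v, 'e) outcome \<Rightarrow> bool" where
  call_ok:   "r \<in> R \<Longrightarrow> r G H \<Longrightarrow> exec (Call R) G (Ok H)"
| call_fail: "(\<forall>r\<in>R. \<forall>H. \<not> r G H) \<Longrightarrow> exec (Call R) G Failed"
| seq_ok:    "exec P G (Ok G') \<Longrightarrow> exec Q G' res \<Longrightarrow> exec (Seq P Q) G res"
| seq_fail:  "exec P G Failed \<Longrightarrow> exec (Seq P Q) G Failed"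
| seq_brk:   "exec P G (Brk G') \<Longrightarrow> exec (Seq P Q) G (Brk G')"
| loop_ok:   "exec P G (Ok G') \<Longrightarrow> exec (Loop P) G' res \<Longrightarrow> exec (Loop P) G res"
| loop_fail: "exec P G Failed \<Longrightarrow> exec (Loop P) G (Ok G)"
| loop_brk:  "exec P G (Brk G') \<Longrightarrow> exec (Loop P) G (Ok G')"
| break:     "exec Break G (Brk G)"
| fail:      "exec FailC G Failed"
| skip:      "exec Skip G (Ok G)"
| try_ok:    "exec C G (Ok G') \<Longrightarrow> exec P G' res \<Longrightarrow> exec (Try C P Q) G res"
| try_fail:  "exec C G Failed \<Longrightarrow> exec Q G res \<Longrightarrow> exec (Try C P Q) G res"
| try_brk:   "exec C G (Brk G') \<Longrightarrow> exec (Try C P Q) G (Brk G')"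
| if_ok:     "exec C G (Ok G') \<Longrightarrow> exec P G res \<Longrightarrow> exec (IfC C P Q) G res"
| if_fail:   "exec C G Failed \<Longrightarrow> exec Q G res \<Longrightarrow> exec (IfC C P Q) G res"
| if_brk:    "exec C G (Brk G') \<Longrightarrow> exec (IfC C P Q) G (Brk G')"

text \<open>Termination: every execution of the command from G is finite (least fixpoint,
  i.e. the tree of all executions is well-founded).\<close>
inductive terminates :: "('v, 'e) cmd \<Rightarrow> ('v, 'e) hgraph \<Rightarrow> bool" where
  "terminates (Call R) G"
| "terminates P G \<Longrightarrow> (\<forall>G'. exec P G (Ok G') \<longrightarrow> terminates Q G') \<Longrightarrow> terminates (Seq P Q) G"
| "terminates P G \<Longrightarrow> (\<forall>G'. exec P G (Ok G') \<longrightarrow> terminates (Loop P) G') \<Longrightarrow> terminates (Loop P) G"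
| "terminates Break G"
| "terminates FailC G"
| "terminates Skip G"
| "terminates C G \<Longrightarrow> (\<forall>G'. exec C G (Ok G') \<longrightarrow> terminates P G') \<Longrightarrow>
     (exec C G Failed \<longrightarrow> terminates Q G) \<Longrightarrow> terminates (Try C P Q) G"
| "terminates C G \<Longrightarrow> ((\<exists>G'. exec C G (Ok G')) \<longrightarrow> terminates P G) \<Longrightarrow>
     (exec C G Failed \<longrightarrow> terminates Q G) \<Longrightarrow> terminates (IfC C P Q) G"

definition FORWARD :: "('v, 'e) cmd" where
  "FORWARD = Seq (Call {next_edge_r}) (Call {move_r, ignore_r})"

definition DFS :: "('v, 'e) cmd" where
  "DFS = Seq (Loop FORWARD) (Try (Call {back_r}) Skip Break)"

definition Check :: "('v, 'e) cmd" where
  "Check = IfC (Call {match_r}) FailC Skip"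

definition is_connected_prog :: "('v, 'e) cmd" where
  "is_connected_prog = Try (Call {init_r}) (Seq (Loop DFS) Check) Skip"

end

theory Submission
  imports Defs
begin

(* The program is a depth-first search from the node chosen by init. Between two iterations
   of a loop, the marks encode a DFS state: the dashed edges form the stack, a walk from the
   start node to the unique root; blue nodes are the visited ones and all are reachable from
   the start node; a visited node off the stack has no unmarked edge left (loops aside, which
   next_edge never matches). When next_edge and back both fail, the stack is the start node
   alone, so the blue nodes are closed under adjacency: they form the component of the start
   node, and match finds a grey node exactly when the graph is disconnected.
   Termination: with unmarked edges weighing 2 and dashed edges 1, every successful FORWARD
   and every back lowers the total weight. *)

inductive_simps exec_Call_iff: "exec (Call R) G res"
inductive_simps exec_Seq_iff: "exec (Seq P Q) G res"
inductive_simps exec_Try_iff: "exec (Try C P Q) G res"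
inductive_simps exec_IfC_iff: "exec (IfC C P Q) G res"
inductive_simps exec_Skip_iff: "exec Skip G res"
inductive_simps exec_Break_iff: "exec Break G res"
inductive_simps exec_FailC_iff: "exec FailC G res"

lemmas exec_iffs = exec_Call_iff exec_Seq_iff exec_Try_iff exec_IfC_iff
  exec_Skip_iff exec_Break_iff exec_FailC_iff

lemma terminates_imp_exec: "terminates P G \<Longrightarrow> \<exists>res. exec P G res"
proof (induction rule: terminates.induct)
  case (1 R G)
  then show ?case by (metis exec.call_ok exec.call_fail)
next
  case (2 P G Q)
  then obtain res where "exec P G res" by blast
  with 2 show ?case by (cases res) (blast intro: exec.intros)+
next
  case (3 P G)
  then obtain res where "exec P G res" by blast
  with 3 show ?case by (cases res) (blast intro: exec.intros)+
next
  case (7 C G P Q)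
  then obtain res where "exec C G res" by blast
  with 7 show ?case by (cases res) (blast intro: exec.intros)+
next
  case (8 C G P Q)
  then obtain res where "exec C G res" by blast
  with 8 show ?case by (cases res) (blast intro: exec.intros)+
qed (blast intro: exec.intros)+

lemma exec_Loop_invariant:
  assumes "exec (Loop P) G res" and "I G"
    and step: "\<And>H H'. I H \<Longrightarrow> exec P H (Ok H') \<Longrightarrow> I H'"
  shows "\<exists>H. res = Ok H \<and> (I H \<and> exec P H Failed \<or> (\<exists>H'. I H' \<and> exec P H' (Brk H)))"
  using assms(1,2)
proof (induction "Loop P" G res rule: exec.induct)
  case (loop_ok G G' res)
  then show ?case using step by blast
qed blast+

lemma terminates_Loop_measure:
  fixes f :: "('v, 'e) hgraph \<Rightarrow> nat"
  assumes "I G"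
    and body: "\<And>H. I H \<Longrightarrow> terminates P H"
    and step: "\<And>H H'. I H \<Longrightarrow> exec P H (Ok H') \<Longrightarrow> I H' \<and> f H' < f H"
  shows "terminates (Loop P) G"
  using assms(1)
proof (induction G rule: measure_induct_rule[where f = f])
  case (less G)
  show ?case
  proof (rule terminates.intros(3))
    show "terminates P G" using less.prems by (rule body)
    show "\<forall>G'. exec P G (Ok G') \<longrightarrow> terminates (Loop P) G'"
      using less step by blast
  qed
qed

definition unmark :: "('v, 'e) hgraph \<Rightarrow> ('v, 'e) hgraph" where
  "unmark G = G\<lparr>nmk := \<lambda>_. NUnmarked, emk := \<lambda>_. EUnmarked, root := \<lambda>_. False\<rparr>"

lemma unmark_eqD:
  assumes "unmark G = unmark H"
  shows "V G = V H" "E G = E H" "src G = src H" "tgt G = tgt H" "nlab G = nlab H" "elab G = elab H"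
  using arg_cong[OF assms, of V] arg_cong[OF assms, of E] arg_cong[OF assms, of src]
    arg_cong[OF assms, of tgt] arg_cong[OF assms, of nlab] arg_cong[OF assms, of elab]
  by (simp_all add: unmark_def)

lemma joins_eq_if_unmark_eq:
  assumes "unmark G = unmark H"
  shows "joins G = joins H"
  using unmark_eqD[OF assms] by (simp add: fun_eq_iff joins_def)

lemma iso_up_to_marks_if_unmark_eq:
  assumes "unmark G = unmark H"
  shows "iso_up_to_marks G H"
  unfolding iso_up_to_marks_def
  using unmark_eqD[OF assms] by (intro exI[of _ id]) simp

lemma rules_keep_structure:
  "init_r G H \<Longrightarrow> unmark H = unmark G"
  "next_edge_r G H \<Longrightarrow> unmark H = unmark G"
  "ignore_r G H \<Longrightarrow> unmark H = unmark G"
  "move_r G H \<Longrightarrow> unmark H = unmark G"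
  "back_r G H \<Longrightarrow> unmark H = unmark G"
  by (auto simp: init_r_def next_edge_r_def ignore_r_def move_r_def back_r_def unmark_def)

lemmas rules_keep_edges = rules_keep_structure[THEN unmark_eqD(2)]

lemma joins_update_marks [simp]:
  "joins (G\<lparr>nmk := n\<rparr>) = joins G" "joins (G\<lparr>emk := m\<rparr>) = joins G" "joins (G\<lparr>root := r\<rparr>) = joins G"
  by (simp_all add: joins_def fun_eq_iff)

lemma joins_sym: "joins G e u v \<longleftrightarrow> joins G e v u"
  by (auto simp: joins_def)

lemma joins_other_end_unique: "joins G e u v \<Longrightarrow> joins G e u w \<Longrightarrow> v = w"
  by (auto simp: joins_def)

lemma joins_ends: "joins G e u v \<Longrightarrow> joins G e x y \<Longrightarrow> x = u \<or> x = v"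
  by (auto simp: joins_def)

lemma joins_in_V: "host_graph G \<Longrightarrow> joins G e u v \<Longrightarrow> v \<in> V G"
  by (auto simp: joins_def host_graph_def)

lemma symp_uadj: "symp (uadj G)"
  by (auto simp: symp_def uadj_def)

fun mark_weight :: "emark \<Rightarrow> nat" where
  "mark_weight EUnmarked = 2"
| "mark_weight EDashed = 1"
| "mark_weight _ = 0"

definition dfs_measure :: "('v, 'e) hgraph \<Rightarrow> nat" where
  "dfs_measure G = (\<Sum>f\<in>E G. mark_weight (emk G f))"

lemma dfs_measure_update:
  assumes "finite (E G)" "e \<in> E G" "E H = E G" "emk H = (emk G)(e := m)"
  shows "dfs_measure H + mark_weight (emk G e) = dfs_measure G + mark_weight m"
proof -
  have rest: "(\<Sum>f\<in>E G - {e}. mark_weight (emk H f)) = (\<Sum>f\<in>E G - {e}. mark_weight (emk G f))"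
    using assms(4) by (intro sum.cong) auto
  show ?thesis
    unfolding dfs_measure_def assms(3) sum.remove[OF assms(1,2)] rest
    using assms(4) by simp
qed

lemma next_edge_r_measure:
  assumes "next_edge_r G H" "finite (E G)"
  shows "dfs_measure H + 2 = dfs_measure G"
proof -
  obtain u v e where "joins G e u v" "emk G e = EUnmarked"
    "H = G\<lparr>emk := (emk G)(e := ERed), root := (root G)(v := False)\<rparr>"
    using assms(1) unfolding next_edge_r_def by blast
  then show ?thesis using dfs_measure_update[of G e H ERed] assms(2) by (simp add: joins_def)
qed

lemma move_r_measure:
  assumes "move_r G H" "finite (E G)"
  shows "dfs_measure H = dfs_measure G + 1"
proof -
  obtain u v e where "joins G e u v" "emk G e = ERed"
    "H = G\<lparr>nmk := (nmk G)(v := NBlue), emk := (emk G)(e := EDashed),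
           root := (root G)(u := False, v := True)\<rparr>"
    using assms(1) unfolding move_r_def by blast
  then show ?thesis using dfs_measure_update[of G e H EDashed] assms(2) by (simp add: joins_def)
qed

lemma ignore_r_measure:
  assumes "ignore_r G H" "finite (E G)"
  shows "dfs_measure H = dfs_measure G"
proof -
  obtain u v e where "joins G e u v" "emk G e = ERed"
    "H = G\<lparr>emk := (emk G)(e := EBlue), root := (root G)(v := False)\<rparr>"
    using assms(1) unfolding ignore_r_def by blast
  then show ?thesis using dfs_measure_update[of G e H EBlue] assms(2) by (simp add: joins_def)
qed

lemma back_r_measure:
  assumes "back_r G H" "finite (E G)"
  shows "dfs_measure H + 1 = dfs_measure G"
proof -
  obtain u v e where "joins G e u v" "emk G e = EDashed"
    "H = G\<lparr>emk := (emk G)(e := EBlue), root := (root G)(u := True, v := False)\<rparr>"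
    using assms(1) unfolding back_r_def by blast
  then show ?thesis using dfs_measure_update[of G e H EBlue] assms(2) by (simp add: joins_def)
qed

lemma FORWARD_measure:
  assumes "exec FORWARD G (Ok H)" "finite (E G)"
  shows "finite (E H) \<and> dfs_measure H < dfs_measure G"
proof -
  obtain G1 where G1: "next_edge_r G G1" and H: "move_r G1 H \<or> ignore_r G1 H"
    using assms(1) by (auto simp: FORWARD_def exec_Seq_iff exec_Call_iff)
  have "E G1 = E G" "E H = E G1"
    using rules_keep_edges(2)[OF G1] H rules_keep_edges(3,4)[of G1 H] by auto
  then show ?thesis
    using assms(2) H next_edge_r_measure[OF G1] move_r_measure[of G1 H] ignore_r_measure[of G1 H]
    by auto
qed

lemma exec_FORWARD_not_Brk: "\<not> exec FORWARD G (Brk H)"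
  by (simp add: FORWARD_def exec_Seq_iff exec_Call_iff)

lemma terminates_FORWARD: "terminates FORWARD G"
  by (auto simp: FORWARD_def intro: terminates.intros)

lemma terminates_Loop_FORWARD: "finite (E G) \<Longrightarrow> terminates (Loop FORWARD) G"
  by (rule terminates_Loop_measure[where I = "\<lambda>H. finite (E H)" and f = dfs_measure])
    (auto intro: terminates_FORWARD dest: FORWARD_measure)

lemma Loop_FORWARD_measure:
  assumes "exec (Loop FORWARD) G (Ok H)" "finite (E G)"
  shows "finite (E H) \<and> dfs_measure H \<le> dfs_measure G"
  using exec_Loop_invariant[where I = "\<lambda>H. finite (E H) \<and> dfs_measure H \<le> dfs_measure G", OF assms(1)]
    assms(2) FORWARD_measure exec_FORWARD_not_Brk by fastforce

lemma DFS_measure: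
  assumes "exec DFS G (Ok H)" "finite (E G)"
  shows "finite (E H) \<and> dfs_measure H < dfs_measure G"
proof -
  obtain G1 where G1: "exec (Loop FORWARD) G (Ok G1)" and H: "back_r G1 H"
    using assms(1) by (auto simp: DFS_def exec_iffs)
  then show ?thesis
    using Loop_FORWARD_measure[OF G1 assms(2)] back_r_measure[OF H] rules_keep_edges(5)[OF H]
    by auto
qed

lemma is_connected_prog_terminates:
  assumes "finite (E G)"
  shows "terminates is_connected_prog G"
proof -
  have "terminates DFS G'" if "finite (E G')" for G'
    using that unfolding DFS_def
    by (auto intro!: terminates.intros(1,2,4,6,7) terminates_Loop_FORWARD)
  then have "terminates (Loop DFS) G'" if "finite (E G')" for G'
    by (rule terminates_Loop_measure[where I = "\<lambda>H. finite (E H)" and f = dfs_measure, OF that])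
      (auto dest: DFS_measure)
  moreover have "terminates Check G'" for G'
    by (auto simp: Check_def intro: terminates.intros)
  ultimately show ?thesis
    using assms rules_keep_edges(1)[of G]
    by (auto simp: is_connected_prog_def exec_Call_iff intro!: terminates.intros(1,2,6,7))
qed

lemma exec_Check_iff:
  "exec Check G res \<longleftrightarrow> res = (if \<exists>x\<in>V G. nmk G x = NGrey then Failed else Ok G)"
  by (auto simp: Check_def exec_iffs match_r_def)

fun walk :: "('e \<Rightarrow> 'v \<Rightarrow> 'v \<Rightarrow> bool) \<Rightarrow> 'v list \<Rightarrow> 'e list \<Rightarrow> bool" where
  "walk J [x] [] \<longleftrightarrow> True"
| "walk J (y # x # xs) (e # es) \<longleftrightarrow> J e y x \<and> walk J (x # xs) es"
| "walk J _ _ \<longleftrightarrow> False"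

lemma walk_Cons: "walk J xs es \<Longrightarrow> walk J (v # xs) (e # es) \<longleftrightarrow> J e v (hd xs)"
  by (cases xs) auto

lemma walk_ConsE:
  assumes "walk J xs (f # fs)"
  obtains v u ys where "xs = v # u # ys" "J f v u" "walk J (u # ys) fs"
  using assms by (cases "(J, xs, f # fs)" rule: walk.cases) auto

lemma walk_edge_ends: "walk (joins G) xs es \<Longrightarrow> e \<in> set es \<Longrightarrow> joins G e u v \<Longrightarrow> u \<in> set xs"
  by (induction "joins G" xs es rule: walk.induct) (auto dest: joins_ends)

(* G0 is the input graph and G the current one. The stack xs (root first, start node last)
   and its dashed edges es are ghost data: they are not stored in the graph. *)
locale dfs_invariant =
  fixes G0 :: "('v, 'e) hgraph" and xs :: "'v list" and es :: "'e list" and G :: "('v, 'e) hgraph"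
  assumes host: "host_graph G0"
    and only_marks_changed: "unmark G = unmark G0"
    and grey_or_blue: "x \<in> V G0 \<Longrightarrow> nmk G x = NGrey \<or> nmk G x = NBlue"
    and no_red: "f \<in> E G0 \<Longrightarrow> emk G f \<noteq> ERed"
    and marked_blue: "joins G0 f x y \<Longrightarrow> emk G f \<noteq> EUnmarked \<Longrightarrow> nmk G x = NBlue"
    and walk: "walk (joins G0) xs es"
    and distinct: "distinct xs"
    and stack_V: "set xs \<subseteq> V G0"
    and stack_blue: "x \<in> set xs \<Longrightarrow> nmk G x = NBlue"
    and root_iff: "x \<in> V G0 \<Longrightarrow> root G x \<longleftrightarrow> x = hd xs"
    and dashed_iff: "f \<in> E G0 \<Longrightarrow> emk G f = EDashed \<longleftrightarrow> f \<in> set es"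
    and explored: "nmk G x = NBlue \<Longrightarrow> x \<notin> set xs \<Longrightarrow> joins G0 f x y \<Longrightarrow> y \<noteq> x
      \<Longrightarrow> emk G f \<noteq> EUnmarked"
    and reachable: "x \<in> V G0 \<Longrightarrow> nmk G x = NBlue \<Longrightarrow> (uadj G0)\<^sup>*\<^sup>* (last xs) x"

lemma dfs_invariant_init:
  assumes "host_graph G0" "\<forall>x\<in>V G0. nmk G0 x = NGrey \<and> \<not> root G0 x"
    "\<forall>f\<in>E G0. emk G0 f = EUnmarked" "u \<in> V G0"
  shows "dfs_invariant G0 [u] [] (G0\<lparr>nmk := (nmk G0)(u := NBlue), root := (root G0)(u := True)\<rparr>)"
  using assms by unfold_locales (auto simp: unmark_def joins_def host_graph_def split: if_splits)

context dfs_invariant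
begin

lemma stack_nonempty: "xs \<noteq> []"
  using walk by (cases xs) auto

lemma hd_stack: "hd xs \<in> V G0" "nmk G (hd xs) = NBlue"
  using stack_nonempty stack_V stack_blue by auto

lemma same_structure: "V G = V G0" "E G = E G0" "joins G = joins G0"
  using unmark_eqD[OF only_marks_changed] joins_eq_if_unmark_eq[OF only_marks_changed] by simp_all

lemma push:
  assumes e: "joins G0 e (hd xs) v" "emk G e = EUnmarked" and v: "nmk G v = NGrey"
    and H: "unmark H = unmark G" "nmk H = (nmk G)(v := NBlue)" "emk H = (emk G)(e := EDashed)"
      "\<forall>x\<in>V G0. root H x \<longleftrightarrow> x = v"
  shows "dfs_invariant G0 (v # xs) (e # es) H"
proof unfold_locales
  show "nmk H x = NBlue" if "joins G0 f x y" "emk H f \<noteq> EUnmarked" for f x y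
  proof (cases "f = e")
    case True
    then show ?thesis using that e hd_stack H by (auto dest: joins_ends)
  qed (use that H marked_blue in auto)
  show "walk (joins G0) (v # xs) (e # es)"
    using walk e by (simp add: walk_Cons joins_sym)
  show "distinct (v # xs)"
    using distinct stack_blue v by auto
  show "set (v # xs) \<subseteq> V G0"
    using stack_V joins_in_V[OF host e(1)] by simp
  show "nmk H x = NBlue" if "x \<in> set (v # xs)" for x
    using that stack_blue H by auto
  show "emk H f \<noteq> EUnmarked" if "nmk H x = NBlue" "x \<notin> set (v # xs)" "joins G0 f x y" "y \<noteq> x"
    for x f y
    using that explored H by auto
  show "(uadj G0)\<^sup>*\<^sup>* (last (v # xs)) x" if "x \<in> V G0" "nmk H x = NBlue" for x
  proof (cases "x = v")
    case True
    have "uadj G0 (hd xs) v" using e by (auto simp: joins_def uadj_def)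
    then show ?thesis
      using True reachable[OF hd_stack] stack_nonempty by simp
  qed (use that H reachable stack_nonempty in auto)
qed (use only_marks_changed grey_or_blue no_red dashed_iff host H in auto)

lemma ignore:
  assumes e: "joins G0 e (hd xs) v" "emk G e = EUnmarked" and v: "nmk G v = NBlue"
    and H: "unmark H = unmark G" "nmk H = nmk G" "emk H = (emk G)(e := EBlue)"
      "\<forall>x\<in>V G0. root H x \<longleftrightarrow> root G x"
  shows "dfs_invariant G0 xs es H"
proof unfold_locales
  have "e \<notin> set es" using dashed_iff[of e] e by (auto simp: joins_def)
  then show "emk H f = EDashed \<longleftrightarrow> f \<in> set es" if "f \<in> E G0" for f
    using that dashed_iff H by auto
  show "nmk H x = NBlue" if "joins G0 f x y" "emk H f \<noteq> EUnmarked" for f x y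
  proof (cases "f = e")
    case True
    then show ?thesis using that e v hd_stack H by (auto dest: joins_ends)
  qed (use that H marked_blue in auto)
  show "emk H f \<noteq> EUnmarked" if "nmk H x = NBlue" "x \<notin> set xs" "joins G0 f x y" "y \<noteq> x"
    for x f y
    using that explored H by auto
qed (use only_marks_changed grey_or_blue no_red walk distinct stack_V stack_blue root_iff
      reachable host H in auto)

lemma pop:
  assumes stack: "xs = v # u # ys" "es = e # fs"
    and v_explored: "\<And>f y. joins G0 f v y \<Longrightarrow> y \<noteq> v \<Longrightarrow> emk G f \<noteq> EUnmarked"
    and H: "unmark H = unmark G" "nmk H = nmk G" "emk H = (emk G)(e := EBlue)"
      "\<forall>x\<in>V G0. root H x \<longleftrightarrow> x = u"
  shows "dfs_invariant G0 (u # ys) fs H"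
proof unfold_locales
  have e: "joins G0 e v u" and fs: "walk (joins G0) (u # ys) fs"
    using walk stack by auto
  have "e \<notin> set fs"
  proof
    assume "e \<in> set fs"
    then have "v \<in> set (u # ys)" using walk_edge_ends[OF fs _ e] by blast
    then show False using distinct stack by simp
  qed
  then show "emk H f = EDashed \<longleftrightarrow> f \<in> set fs" if "f \<in> E G0" for f
    using that dashed_iff stack H by auto
  show "nmk H x = NBlue" if "joins G0 f x y" "emk H f \<noteq> EUnmarked" for f x y
  proof (cases "f = e")
    case True
    then have "emk G f = EDashed" using e dashed_iff stack by (simp add: joins_def)
    then show ?thesis using that H marked_blue by auto
  qed (use that H marked_blue in auto)
  show "emk H f \<noteq> EUnmarked" if "nmk H x = NBlue" "x \<notin> set (u # ys)" "joins G0 f x y" "y \<noteq> x"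
    for x f y
    using that explored v_explored stack H by (cases "x = v") auto
qed (use only_marks_changed grey_or_blue no_red walk distinct stack_V stack_blue root_iff
      reachable host stack H in auto)

lemma next_edge_at_root:
  assumes "next_edge_r G G1"
  obtains v e where "v \<noteq> hd xs" "joins G0 e (hd xs) v" "emk G e = EUnmarked"
    "G1 = G\<lparr>emk := (emk G)(e := ERed), root := (root G)(v := False)\<rparr>"
proof -
  obtain u v e where u: "u \<in> V G" "root G u" and "u \<noteq> v" "joins G e u v" "emk G e = EUnmarked"
    "G1 = G\<lparr>emk := (emk G)(e := ERed), root := (root G)(v := False)\<rparr>"
    using assms unfolding next_edge_r_def by blast
  moreover have "u = hd xs" using u root_iff same_structure by simp
  ultimately show thesis using same_structure by (intro that[of v e]) auto
qed

lemma next_edge_progress: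
  assumes "next_edge_r G G1"
  shows "\<exists>H. move_r G1 H \<or> ignore_r G1 H"
proof -
  obtain v e where v: "v \<noteq> hd xs" and e: "joins G0 e (hd xs) v" "emk G e = EUnmarked"
    and G1: "G1 = G\<lparr>emk := (emk G)(e := ERed), root := (root G)(v := False)\<rparr>"
    using next_edge_at_root[OF assms] .
  have u: "hd xs \<in> V G1" "nmk G1 (hd xs) = NBlue" "root G1 (hd xs)"
    using hd_stack root_iff v G1 same_structure by auto
  have "v \<in> V G1" "joins G1 e (hd xs) v" "emk G1 e = ERed"
    using joins_in_V[OF host e(1)] e G1 same_structure by auto
  moreover have "nmk G1 v = NGrey \<or> nmk G1 v = NBlue"
    using grey_or_blue joins_in_V[OF host e(1)] G1 by simp
  ultimately show ?thesis
    using u v[symmetric] unfolding move_r_def ignore_r_def by blast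
qed

lemma FORWARD_step:
  assumes "next_edge_r G G1" "move_r G1 H \<or> ignore_r G1 H"
  shows "\<exists>xs' es'. dfs_invariant G0 xs' es' H"
proof -
  obtain v e where v: "v \<noteq> hd xs" and e: "joins G0 e (hd xs) v" "emk G e = EUnmarked"
    and G1: "G1 = G\<lparr>emk := (emk G)(e := ERed), root := (root G)(v := False)\<rparr>"
    using next_edge_at_root[OF assms(1)] .
  have red_edge: "u' = hd xs \<and> e' = e \<and> v' = v"
    if "u' \<in> V G1" "root G1 u'" "joins G1 e' u' v'" "emk G1 e' = ERed" for u' e' v'
  proof -
    have "u' = hd xs" using that(1,2) root_iff G1 same_structure by (auto split: if_splits)
    moreover have "e' = e"
      using that(3,4) no_red G1 same_structure by (auto simp: joins_def split: if_splits)
    moreover have "v' = v"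
      using that(3) e(1) G1 same_structure \<open>u' = hd xs\<close> \<open>e' = e\<close>
      by (auto intro: joins_other_end_unique)
    ultimately show ?thesis by blast
  qed
  from assms(2) show ?thesis
  proof
    assume "move_r G1 H"
    then obtain u' v' e' where "u' \<in> V G1" "root G1 u'" "joins G1 e' u' v'" "emk G1 e' = ERed"
      and grey: "nmk G1 v' = NGrey"
      and H: "H = G1\<lparr>nmk := (nmk G1)(v' := NBlue), emk := (emk G1)(e' := EDashed),
           root := (root G1)(u' := False, v' := True)\<rparr>"
      unfolding move_r_def by blast
    with red_edge have "u' = hd xs" "e' = e" "v' = v" by blast+
    then have "dfs_invariant G0 (v # xs) (e # es) H"
      using grey H G1 v root_iff by (intro push[OF e]) (auto simp: unmark_def)
    then show ?thesis by blast
  next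
    assume "ignore_r G1 H"
    then obtain u' v' e' where "u' \<in> V G1" "root G1 u'" "joins G1 e' u' v'" "emk G1 e' = ERed"
      and blue: "nmk G1 v' = NBlue"
      and H: "H = G1\<lparr>emk := (emk G1)(e' := EBlue), root := (root G1)(v' := False)\<rparr>"
      unfolding ignore_r_def by blast
    with red_edge have "u' = hd xs" "e' = e" "v' = v" by blast+
    then have "dfs_invariant G0 xs es H"
      using blue H G1 v root_iff by (intro ignore[OF e]) (auto simp: unmark_def)
    then show ?thesis by blast
  qed
qed

lemma root_explored:
  assumes "\<forall>H. \<not> next_edge_r G H" "joins G0 f (hd xs) y" "y \<noteq> hd xs"
  shows "emk G f \<noteq> EUnmarked"
proof
  assume "emk G f = EUnmarked"
  moreover have "hd xs \<in> V G" "y \<in> V G" "root G (hd xs)" "joins G f (hd xs) y" "hd xs \<noteq> y"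
    using hd_stack root_iff joins_in_V[OF host assms(2)] same_structure assms(2,3) by auto
  ultimately have "next_edge_r G (G\<lparr>emk := (emk G)(f := ERed), root := (root G)(y := False)\<rparr>)"
    unfolding next_edge_r_def using hd_stack by blast
  then show False using assms(1) by blast
qed

lemma back_possible:
  assumes "es \<noteq> []"
  shows "\<exists>H. back_r G H"
proof -
  obtain f fs where es: "es = f # fs" using assms by (cases es) auto
  then obtain v u ys where stack: "xs = v # u # ys" and f: "joins G0 f v u"
    using walk by (auto elim: walk_ConsE)
  have "joins G f u v" "emk G f = EDashed"
    using f dashed_iff es same_structure by (auto simp: joins_sym joins_def)
  moreover have "u \<in> V G" "v \<in> V G" "u \<noteq> v" "nmk G u = NBlue" "nmk G v = NBlue" "root G v"
    using stack_V stack_blue distinct root_iff stack same_structure by auto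
  ultimately show ?thesis unfolding back_r_def by blast
qed

lemma back_step:
  assumes "\<forall>H'. \<not> next_edge_r G H'" "back_r G H"
  shows "\<exists>xs' es'. dfs_invariant G0 xs' es' H"
proof -
  obtain u v e where "v \<in> V G" "root G v" and e: "joins G e u v" "emk G e = EDashed"
    and H: "H = G\<lparr>emk := (emk G)(e := EBlue), root := (root G)(u := True, v := False)\<rparr>"
    using assms(2) unfolding back_r_def by blast
  then have v: "v = hd xs" and e0: "joins G0 e v u"
    using root_iff same_structure by (auto simp: joins_sym)
  have "e \<in> set es" using e dashed_iff same_structure by (auto simp: joins_def)
  then obtain f fs where es: "es = f # fs" by (cases es) auto
  then obtain u' ys where xs: "xs = v # u' # ys"
    using walk v by (auto elim: walk_ConsE)
  note stack = xs es
  have "e = f"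
  proof (rule ccontr)
    assume "e \<noteq> f"
    have "walk (joins G0) (u' # ys) fs" using walk stack by simp
    moreover have "e \<in> set fs" using \<open>e \<in> set es\<close> \<open>e \<noteq> f\<close> stack by simp
    ultimately have "v \<in> set (u' # ys)" using e0 by (rule walk_edge_ends)
    then show False using distinct stack by simp
  qed
  then have "u = u'" using walk stack e0 by (auto intro: joins_other_end_unique)
  have "dfs_invariant G0 (u' # ys) fs H"
  proof (rule pop[OF stack])
    show "emk G f' \<noteq> EUnmarked" if "joins G0 f' v y" "y \<noteq> v" for f' y
      using root_explored[OF assms(1)] that v by simp
    have "u' \<noteq> v" using distinct stack by auto
    then show "\<forall>x\<in>V G0. root H x \<longleftrightarrow> x = u'"
      using H root_iff v \<open>u = u'\<close> by simp
  qed (use H \<open>e = f\<close> \<open>u = u'\<close> in \<open>auto simp: unmark_def\<close>)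
  then show ?thesis by blast
qed

lemma final_blue_closed:
  assumes "xs = [r]" "\<forall>H. \<not> next_edge_r G H" "nmk G x = NBlue" "uadj G0 x y"
  shows "nmk G y = NBlue"
proof -
  obtain f where f: "joins G0 f x y" using assms(4) by (auto simp: uadj_def joins_def)
  show ?thesis
  proof (cases "y = x")
    case False
    then have "emk G f \<noteq> EUnmarked"
      using root_explored[OF assms(2)] explored[OF assms(3) _ f] f assms(1) by (cases "x = r") auto
    then show ?thesis using marked_blue[of f y x] f by (simp add: joins_sym)
  qed (use assms(3) in simp)
qed

lemma final_connected_iff:
  assumes "xs = [r]" "\<forall>H. \<not> next_edge_r G H"
  shows "connected_graph G0 \<longleftrightarrow> (\<forall>x\<in>V G0. nmk G x = NBlue)"
proof
  assume "connected_graph G0"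
  show "\<forall>x\<in>V G0. nmk G x = NBlue"
  proof
    fix x assume "x \<in> V G0"
    then have "(uadj G0)\<^sup>*\<^sup>* r x"
      using \<open>connected_graph G0\<close> hd_stack assms(1) by (simp add: connected_graph_def)
    then show "nmk G x = NBlue"
      by (induction rule: rtranclp_induct) (use hd_stack assms final_blue_closed in auto)
  qed
next
  assume blue: "\<forall>x\<in>V G0. nmk G x = NBlue"
  have "(uadj G0)\<^sup>*\<^sup>* x y" if "x \<in> V G0" "y \<in> V G0" for x y
  proof -
    have "(uadj G0)\<^sup>*\<^sup>* r x" "(uadj G0)\<^sup>*\<^sup>* r y"
      using reachable blue that assms(1) by auto
    then show ?thesis
      using sympD[OF symp_rtranclp[OF symp_uadj]] by (metis rtranclp_trans)
  qed
  then show "connected_graph G0" by (simp add: connected_graph_def)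
qed

lemma Check_result:
  assumes "xs = [r]" "\<forall>H. \<not> next_edge_r G H" "exec Check G res"
  shows "res = (if connected_graph G0 then Ok G else Failed)"
proof -
  have "connected_graph G0 \<longleftrightarrow> \<not> (\<exists>x\<in>V G. nmk G x = NGrey)"
    using final_connected_iff[OF assms(1,2)] grey_or_blue same_structure by force
  then show ?thesis using assms(3) by (simp add: exec_Check_iff)
qed

end

lemma Loop_FORWARD_result:
  assumes "exec (Loop FORWARD) G res" "dfs_invariant G0 xs es G"
  shows "\<exists>H xs' es'. res = Ok H \<and> dfs_invariant G0 xs' es' H \<and> (\<forall>H'. \<not> next_edge_r H H')"
proof -
  let ?I = "\<lambda>H. \<exists>xs es. dfs_invariant G0 xs es H"
  have "\<exists>H. res = Ok H \<and> (?I H \<and> exec FORWARD H Failed \<or> (\<exists>H'. ?I H' \<and> exec FORWARD H' (Brk H)))"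
    using assms
    by (intro exec_Loop_invariant) (auto simp: FORWARD_def exec_Seq_iff exec_Call_iff
        dest: dfs_invariant.FORWARD_step)
  then show ?thesis
    by (auto simp: FORWARD_def exec_Seq_iff exec_Call_iff dest: dfs_invariant.next_edge_progress)
qed

lemma DFS_result:
  assumes "exec DFS G res" "dfs_invariant G0 xs es G"
  shows "(\<exists>H xs' es'. res = Ok H \<and> dfs_invariant G0 xs' es' H)
    \<or> (\<exists>H r. res = Brk H \<and> dfs_invariant G0 [r] [] H \<and> (\<forall>H'. \<not> next_edge_r H H'))"
proof -
  obtain G1 xs1 es1 where G1: "exec (Loop FORWARD) G (Ok G1)" and inv: "dfs_invariant G0 xs1 es1 G1"
    and dead_end: "\<forall>H'. \<not> next_edge_r G1 H'" and try_back: "exec (Try (Call {back_r}) Skip Break) G1 res"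
    using assms Loop_FORWARD_result unfolding DFS_def exec_Seq_iff by blast
  show ?thesis
  proof (cases "\<exists>H. back_r G1 H")
    case True
    then show ?thesis
      using try_back dfs_invariant.back_step[OF inv dead_end] by (auto simp: exec_iffs)
  next
    case False
    then have "es1 = []" using dfs_invariant.back_possible[OF inv] by blast
    then obtain r where "xs1 = [r]"
      using dfs_invariant.walk[OF inv] by (cases "(joins G0, xs1, es1)" rule: walk.cases) auto
    then show ?thesis
      using False try_back inv dead_end \<open>es1 = []\<close> by (auto simp: exec_iffs)
  qed
qed

lemma Loop_DFS_result:
  assumes "exec (Loop DFS) G res" "dfs_invariant G0 xs es G"
  shows "\<exists>H r. res = Ok H \<and> dfs_invariant G0 [r] [] H \<and> (\<forall>H'. \<not> next_edge_r H H')"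
proof -
  let ?I = "\<lambda>H. \<exists>xs es. dfs_invariant G0 xs es H"
  have step: "?I H'" if "?I H" "exec DFS H (Ok H')" for H H'
    using that DFS_result by blast
  have "\<exists>H. res = Ok H \<and> (?I H \<and> exec DFS H Failed \<or> (\<exists>H'. ?I H' \<and> exec DFS H' (Brk H)))"
    by (rule exec_Loop_invariant[where I = ?I, OF assms(1)]) (use assms(2) step in blast)+
  then show ?thesis by (blast dest: DFS_result)
qed

lemma is_connected_prog_correct:
  assumes host: "host_graph G"
    and grey: "\<forall>v\<in>V G. nmk G v = NGrey \<and> \<not> root G v"
    and unmarked: "\<forall>e\<in>E G. emk G e = EUnmarked"
    and run: "exec is_connected_prog G res"
  shows "if connected_graph G then \<exists>H. res = Ok H \<and> iso_up_to_marks G H else res = Failed"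
proof (cases "V G = {}")
  case True
  then have "\<forall>H. \<not> init_r G H" by (simp add: init_r_def)
  then show ?thesis
    using run True iso_up_to_marks_if_unmark_eq[of G G]
    by (auto simp: is_connected_prog_def exec_iffs connected_graph_def)
next
  case False
  then have "\<exists>G1. init_r G G1" using grey by (auto simp: init_r_def)
  then obtain G1 where "init_r G G1" and search: "exec (Seq (Loop DFS) Check) G1 res"
    using run by (auto simp: is_connected_prog_def exec_Try_iff exec_Call_iff)
  then obtain u where "dfs_invariant G [u] [] G1"
    using dfs_invariant_init[OF host grey unmarked] by (auto simp: init_r_def)
  then obtain H r where check: "exec Check H res"
    and inv: "dfs_invariant G [r] [] H" and dead_end: "\<forall>H'. \<not> next_edge_r H H'"
    using search Loop_DFS_result unfolding exec_Seq_iff by blast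
  have "iso_up_to_marks G H"
    using iso_up_to_marks_if_unmark_eq dfs_invariant.only_marks_changed[OF inv] by metis
  then show ?thesis
    using dfs_invariant.Check_result[OF inv refl dead_end check] by simp
qed

theorem mainTheorem1:
  fixes G :: "('v, 'e) hgraph"
  assumes "host_graph G"
    and "\<forall>v\<in>V G. nmk G v = NGrey \<and> \<not> root G v"
    and "\<forall>e\<in>E G. emk G e = EUnmarked"
  shows "terminates is_connected_prog G
    \<and> (\<exists>res. exec is_connected_prog G res)
    \<and> (connected_graph G \<longrightarrow>
         (\<forall>res. exec is_connected_prog G res \<longrightarrow>
            (\<exists>H. res = Ok H \<and> iso_up_to_marks G H)))
    \<and> (\<not> connected_graph G \<longrightarrow>
         (\<forall>res. exec is_connected_prog G res \<longrightarrow> res = Failed))"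
proof -
  have terminates: "terminates is_connected_prog G"
    using assms(1) by (intro is_connected_prog_terminates) (simp add: host_graph_def)
  moreover have "\<exists>res. exec is_connected_prog G res"
    using terminates by (rule terminates_imp_exec)
  moreover have "if connected_graph G then \<exists>H. res = Ok H \<and> iso_up_to_marks G H else res = Failed"
    if "exec is_connected_prog G res" for res
    using is_connected_prog_correct[OF assms that] .
  ultimately show ?thesis by (metis (full_types))
qed

end
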